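(* Let $\alpha=3$ and $k=4$. There is no $\mathbf v\in\mathcal D(\mathbf L_3)\subset\mathcal H^4$ with $\mathbf L_3\mathbf v=\mathbf g_{0,3}$, where $$\mathbf g_{0,3}(y)=\begin{pmatrix}-\log(2+y)-\frac34\frac{1}{2+y}\\ 1-\frac{y}{2+y}+\frac34\frac{y}{(2+y)^2}\end{pmatrix}.$$ Equivalently, there is no $v_1$ with $v_1\in H^{5}(-1,1)$ solving $\big(2y+\frac{6}{2+y}\big)v_1'+(y^2-1)v_1''=\log(2+y)+\frac{1}{(2+y)^2}\big(y^2-\frac34y-\frac52\big)$ on $(-1,1)$.
   Context: $\mathcal H^4=H^5(-1,1)\times H^4(-1,1)$. $\mathbf L_3=\mathbf L+\mathbf L_{3,1}$, where $\mathbf L$ is the closure in $\mathcal H^4$ of $\tilde{\mathbf L}\mathbf q=\big(-y\partial_yq_1+q_2-q_1(-1),\ \partial_y^2q_1-q_2-y\partial_yq_2\big)$ on $C^\infty[-1,1]^2$ and $\mathbf L_{3,1}\mathbf q=\big(q_1(-1),-\frac{6}{2+y}\partial_yq_1\big)$, $q_1(-1)$ denoting the constant function. One has $\mathbf L_3\mathbf g_{0,3}=(1,0)$. *)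

theory Defs
  imports "HOL-Analysis.Analysis"
begin

abbreviation I01 :: "real set" where "I01 \<equiv> {-1<..<1}"

definition L2_I :: "(real \<Rightarrow> real) \<Rightarrow> bool" where
  "L2_I f \<longleftrightarrow> set_borel_measurable lborel I01 f
      \<and> set_integrable lborel I01 (\<lambda>x. (f x)\<^sup>2)"

definition test_fun :: "(real \<Rightarrow> real) \<Rightarrow> bool" where
  "test_fun \<phi> \<longleftrightarrow> (\<forall>j x. ((deriv ^^ j) \<phi>) differentiable (at x))
      \<and> (\<exists>a b. -1 < a \<and> b < 1 \<and> (\<forall>x. x \<notin> {a..b} \<longrightarrow> \<phi> x = 0))"

definition weak_deriv :: "nat \<Rightarrow> (real \<Rightarrow> real) \<Rightarrow> (real \<Rightarrow> real) \<Rightarrow> bool" where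
  "weak_deriv j f g \<longleftrightarrow> (\<forall>\<phi>. test_fun \<phi> \<longrightarrow>
      (LBINT x:I01. f x * (deriv ^^ j) \<phi> x) = (-1) ^ j * (LBINT x:I01. g x * \<phi> x))"

definition sobolev_H :: "nat \<Rightarrow> (real \<Rightarrow> real) \<Rightarrow> (nat \<Rightarrow> real \<Rightarrow> real) \<Rightarrow> bool" where
  "sobolev_H k f g \<longleftrightarrow> L2_I f \<and> (\<forall>j\<in>{1..k}. L2_I (g j) \<and> weak_deriv j f (g j))"

end

(* A solution v in H^5(-1,1) has continuous representatives W1, ..., W4 of its weak
   derivatives v^(1), ..., v^(4) on [-1,1] (du Bois-Reymond lemma), with W1' = W2, W2' = W3,
   W3' = W4 classically on (-1,1). So the equation holds pointwise on (-1,1) and can be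
   differentiated twice there. Letting y -> -1, where the coefficient y^2 - 1 of v'' vanishes,
   gives three linear conditions on W1 (-1) and W2 (-1): the coefficient of W3 drops out of the
   second derivative as well, and the resulting system is inconsistent. *)

theory Submission
  imports Defs "HOL-Computational_Algebra.Polynomial"
begin

section \<open>Smooth functions\<close>

fun differentiable_upto :: "nat \<Rightarrow> (real \<Rightarrow> real) \<Rightarrow> bool" where
  "differentiable_upto 0 f = True"
| "differentiable_upto (Suc n) f = ((\<forall>x. f differentiable (at x)) \<and> differentiable_upto n (deriv f))"

definition smooth :: "(real \<Rightarrow> real) \<Rightarrow> bool" where
  "smooth f \<longleftrightarrow> (\<forall>n. differentiable_upto n f)"

lemma differentiable_upto_iff:
  "differentiable_upto n f \<longleftrightarrow> (\<forall>j<n. \<forall>x. ((deriv ^^ j) f) differentiable (at x))"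
proof (induction n arbitrary: f)
  case 0
  then show ?case by simp
next
  case (Suc n)
  have "(\<forall>j<Suc n. \<forall>x. ((deriv ^^ j) f) differentiable (at x)) \<longleftrightarrow>
        (\<forall>x. f differentiable (at x)) \<and> (\<forall>j<n. \<forall>x. ((deriv ^^ Suc j) f) differentiable (at x))"
    by (auto simp del: funpow.simps elim: less_SucE) (metis funpow_0 not0_implies_Suc not_less_eq)
  moreover have "\<And>j. (deriv ^^ Suc j) f = (deriv ^^ j) (deriv f)"
    by (simp add: funpow_Suc_right del: funpow.simps)
  ultimately show ?case using Suc.IH[of "deriv f"] by simp
qed

lemma differentiable_upto_SucD: "differentiable_upto (Suc n) f \<Longrightarrow> differentiable_upto n f"
  by (induction n arbitrary: f) auto

lemma differentiable_upto_derivative_chain: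
  assumes "\<And>j x. (F j has_real_derivative F (Suc j) x) (at x)"
  shows "differentiable_upto n (F 0)"
  using assms
proof (induction n arbitrary: F)
  case 0 then show ?case by simp
next
  case (Suc n)
  have "deriv (F 0) = F 1"
    using Suc.prems[of 0] by (auto intro!: ext DERIV_imp_deriv)
  moreover have "differentiable_upto n ((\<lambda>j. F (Suc j)) 0)"
    by (rule Suc.IH) (use Suc.prems in auto)
  ultimately show ?case using Suc.prems[of 0]
    by (auto simp: real_differentiable_def)
qed

lemma real_differentiable_imp_field_differentiable:
  "(f::real \<Rightarrow> real) differentiable (at x) \<Longrightarrow> f field_differentiable (at x)"
  by (simp add: real_differentiable_def field_differentiable_def)

lemma differentiable_upto_add:
  "differentiable_upto n f \<Longrightarrow> differentiable_upto n g \<Longrightarrow> differentiable_upto n (\<lambda>x. f x + g x)"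
proof (induction n arbitrary: f g)
  case 0 then show ?case by simp
next
  case (Suc n)
  have "deriv (\<lambda>x. f x + g x) = (\<lambda>x. deriv f x + deriv g x)"
    using Suc.prems by (auto intro!: ext deriv_add real_differentiable_imp_field_differentiable)
  then show ?case using Suc by auto
qed

lemma differentiable_upto_const: "differentiable_upto n (\<lambda>x. c)"
proof (induction n arbitrary: c)
  case 0 then show ?case by simp
next
  case (Suc n)
  have "deriv (\<lambda>x. c) = (\<lambda>x. 0)" by auto
  then show ?case using Suc by auto
qed

lemma differentiable_upto_mult:
  "differentiable_upto n f \<Longrightarrow> differentiable_upto n g \<Longrightarrow> differentiable_upto n (\<lambda>x. f x * g x)"
proof (induction n arbitrary: f g)
  case 0 then show ?case by simp
next
  case (Suc n)
  have "deriv (\<lambda>x. f x * g x) = (\<lambda>x. deriv f x * g x + f x * deriv g x)"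
    using Suc.prems by (auto intro!: ext simp: deriv_mult real_differentiable_imp_field_differentiable)
  moreover have "differentiable_upto n (\<lambda>x. deriv f x * g x)" "differentiable_upto n (\<lambda>x. f x * deriv g x)"
    using Suc.prems differentiable_upto_SucD[of n f] differentiable_upto_SucD[of n g]
    by (auto intro!: Suc.IH simp del: differentiable_upto.simps) auto
  ultimately show ?case using Suc.prems by (auto intro!: differentiable_upto_add differentiable_mult)
qed

lemma differentiable_upto_affine:
  "differentiable_upto n f \<Longrightarrow> differentiable_upto n (\<lambda>x. f (a * x + b))"
proof (induction n arbitrary: f)
  case 0 then show ?case by simp
next
  case (Suc n)
  have "\<And>x. f differentiable (at x)" using Suc.prems by simp
  then have derivative: "\<And>x. ((\<lambda>x. f (a * x + b)) has_real_derivative (deriv f (a * x + b) * a)) (at x)"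
    by (auto intro!: derivative_eq_intros DERIV_chain2[where f=f]
        simp: DERIV_deriv_iff_real_differentiable)
  then have "deriv (\<lambda>x. f (a * x + b)) = (\<lambda>x. a * deriv f (a * x + b))"
    by (auto intro!: ext DERIV_imp_deriv simp: mult.commute)
  moreover have "differentiable_upto n (\<lambda>x. deriv f (a * x + b))" using Suc by auto
  ultimately show ?case using derivative
    by (auto intro!: differentiable_upto_mult differentiable_upto_const simp: real_differentiable_def)
qed

lemma smooth_mult: "smooth f \<Longrightarrow> smooth g \<Longrightarrow> smooth (\<lambda>x. f x * g x)"
  unfolding smooth_def by (blast intro: differentiable_upto_mult)

lemma smooth_cmult: "smooth f \<Longrightarrow> smooth (\<lambda>x. c * f x)"
  unfolding smooth_def using differentiable_upto_mult[OF differentiable_upto_const] by blast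

lemma smooth_diff: "smooth f \<Longrightarrow> smooth g \<Longrightarrow> smooth (\<lambda>x. f x - g x)"
  using smooth_cmult[of g "-1"] unfolding smooth_def
  using differentiable_upto_add[of _ f "\<lambda>x. (-1) * g x"] by simp

lemma smooth_affine: "smooth f \<Longrightarrow> smooth (\<lambda>x. f (a * x + b))"
  unfolding smooth_def by (blast intro: differentiable_upto_affine)

lemma smooth_deriv: "smooth f \<Longrightarrow> smooth (deriv f)"
  unfolding smooth_def by (metis differentiable_upto.simps(2))

lemma smooth_differentiable: "smooth f \<Longrightarrow> f differentiable (at x)"
  unfolding smooth_def by (metis differentiable_upto.simps(2))

lemma smooth_has_real_derivative: "smooth f \<Longrightarrow> (f has_real_derivative deriv f x) (at x)"
  using smooth_differentiable DERIV_deriv_iff_real_differentiable by blast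

lemma smooth_continuous_on: "smooth f \<Longrightarrow> continuous_on S f"
  by (metis continuous_at_imp_continuous_on differentiable_imp_continuous_within smooth_differentiable)

lemma smooth_borel_measurable: "smooth f \<Longrightarrow> f \<in> borel_measurable borel"
  by (rule borel_measurable_continuous_onI) (rule smooth_continuous_on)

lemma smooth_antiderivative:
  assumes "\<And>x. (G has_real_derivative g x) (at x)" "smooth g"
  shows "smooth G"
proof -
  have "deriv G = g" using assms(1) by (auto intro!: ext DERIV_imp_deriv)
  have "differentiable_upto n G" for n
  proof (cases n)
    case (Suc m)
    then show ?thesis using assms \<open>deriv G = g\<close>
      by (auto simp: smooth_def real_differentiable_def)
  qed simp
  then show ?thesis by (simp add: smooth_def)
qed

section \<open>A smooth plateau function\<close>

text \<open>The derivatives of \<open>x \<mapsto> exp (-1/x)\<close> on \<open>x > 0\<close> have the form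
  \<open>p\<^sub>j (1/x) exp (-1/x)\<close> with \<open>p\<^sub>0 = 1\<close> and \<open>p\<^sub>j\<^sub>+\<^sub>1 (t) = t\<^sup>2 (p\<^sub>j t - p\<^sub>j' t)\<close>.\<close>

fun flat_exp_poly :: "nat \<Rightarrow> real poly" where
  "flat_exp_poly 0 = 1"
| "flat_exp_poly (Suc j) = [:0, 0, 1:] * (flat_exp_poly j - pderiv (flat_exp_poly j))"

definition flat_exp_deriv :: "nat \<Rightarrow> real \<Rightarrow> real" where
  "flat_exp_deriv j x = (if x > 0 then poly (flat_exp_poly j) (1 / x) * exp (- 1 / x) else 0)"

definition flat_exp :: "real \<Rightarrow> real" where
  "flat_exp x = (if x > 0 then exp (- 1 / x) else 0)"

lemma poly_over_exp_tendsto_0: "((\<lambda>t. poly p t / exp t) \<longlongrightarrow> (0::real)) at_top"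
proof -
  have "((\<lambda>t. \<Sum>i\<le>degree p. coeff p i * (t ^ i / exp t)) \<longlongrightarrow> (\<Sum>i\<le>degree p. coeff p i * 0)) at_top"
    by (intro tendsto_sum tendsto_mult tendsto_const tendsto_power_div_exp_0)
  then show ?thesis
    by (simp add: poly_altdef sum_divide_distrib)
qed

lemma has_real_derivative_flat_exp_deriv_pos:
  assumes "x > 0"
  shows "(flat_exp_deriv j has_real_derivative flat_exp_deriv (Suc j) x) (at x)"
proof -
  let ?P = "flat_exp_poly j"
  have d1: "((\<lambda>x. poly ?P (1/x)) has_real_derivative poly (pderiv ?P) (1/x) * (- 1 / x^2)) (at x)"
    using assms
    by (auto intro!: derivative_eq_intros DERIV_chain2[OF poly_DERIV] simp: power2_eq_square field_simps)
  have d2: "((\<lambda>x. exp (-1/x)) has_real_derivative exp (-1/x) * (1 / x^2)) (at x)"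
    using assms by (auto intro!: derivative_eq_intros simp: power2_eq_square field_simps)
  have "((\<lambda>x. poly ?P (1/x) * exp (-1/x)) has_real_derivative
      poly (pderiv ?P) (1/x) * (- 1 / x^2) * exp (-1/x) + poly ?P (1/x) * (exp (-1/x) * (1 / x^2))) (at x)"
    by (rule DERIV_cong[OF DERIV_mult[OF d1 d2]]) (simp add: algebra_simps)
  moreover have "poly (pderiv ?P) (1/x) * (- 1 / x^2) * exp (-1/x) + poly ?P (1/x) * (exp (-1/x) * (1 / x^2))
      = flat_exp_deriv (Suc j) x"
    using assms by (simp add: flat_exp_deriv_def power2_eq_square field_simps)
  ultimately have "((\<lambda>x. poly ?P (1/x) * exp (-1/x)) has_real_derivative flat_exp_deriv (Suc j) x) (at x)"
    by simp
  then show ?thesis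
    by (rule has_field_derivative_transform_within_open[where S="{0<..}"])
       (use assms in \<open>auto simp: flat_exp_deriv_def\<close>)
qed

lemma has_real_derivative_flat_exp_deriv_neg:
  assumes "x < 0"
  shows "(flat_exp_deriv j has_real_derivative flat_exp_deriv (Suc j) x) (at x)"
proof -
  have "(flat_exp_deriv j has_real_derivative 0) (at x)"
    by (rule has_field_derivative_transform_within_open[where f="\<lambda>_. 0" and S="{..<0}"])
       (use assms in \<open>auto simp: flat_exp_deriv_def\<close>)
  then show ?thesis using assms by (simp add: flat_exp_deriv_def)
qed

lemma has_real_derivative_flat_exp_deriv_0:
  "(flat_exp_deriv j has_real_derivative flat_exp_deriv (Suc j) 0) (at 0)"
proof -
  have "((\<lambda>y. flat_exp_deriv j y / y) \<longlongrightarrow> 0) (at (0::real))"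
  proof (rule filterlim_split_at)
    show "((\<lambda>y. flat_exp_deriv j y / y) \<longlongrightarrow> 0) (at_left (0::real))"
    proof (rule Lim_transform_eventually)
      show "((\<lambda>y. 0) \<longlongrightarrow> (0::real)) (at_left 0)" by simp
      show "\<forall>\<^sub>F y in at_left 0. 0 = flat_exp_deriv j y / (y::real)"
        unfolding eventually_at_filter by (auto simp: flat_exp_deriv_def)
    qed
    show "((\<lambda>y. flat_exp_deriv j y / y) \<longlongrightarrow> 0) (at_right (0::real))"
    proof (rule Lim_transform_eventually)
      show "((\<lambda>y. poly ([:0,1:] * flat_exp_poly j) (inverse y) / exp (inverse y)) \<longlongrightarrow> 0)
          (at_right (0::real))"
        by (rule filterlim_compose[OF poly_over_exp_tendsto_0 filterlim_inverse_at_top_right])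
      show "\<forall>\<^sub>F y in at_right 0.
          poly ([:0,1:] * flat_exp_poly j) (inverse y) / exp (inverse y) = flat_exp_deriv j y / (y::real)"
        unfolding eventually_at_filter by (auto simp: flat_exp_deriv_def exp_minus field_simps)
    qed
  qed
  then show ?thesis
    by (simp add: has_field_derivative_iff flat_exp_deriv_def)
qed

lemma has_real_derivative_flat_exp_deriv:
  "(flat_exp_deriv j has_real_derivative flat_exp_deriv (Suc j) x) (at x)"
  using has_real_derivative_flat_exp_deriv_pos has_real_derivative_flat_exp_deriv_neg
    has_real_derivative_flat_exp_deriv_0
  by (cases x "0::real" rule: linorder_cases) auto

lemma smooth_flat_exp: "smooth flat_exp"
proof -
  have "flat_exp = flat_exp_deriv 0" by (auto simp: flat_exp_def flat_exp_deriv_def)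
  then show ?thesis
    unfolding smooth_def
    using differentiable_upto_derivative_chain[of flat_exp_deriv] has_real_derivative_flat_exp_deriv
    by simp
qed

definition bump :: "real \<Rightarrow> real" where "bump x = flat_exp x * flat_exp (-1 * x + 1)"

lemma smooth_bump: "smooth bump"
  unfolding bump_def by (intro smooth_mult smooth_flat_exp smooth_affine)

lemma bump_nonneg: "0 \<le> bump x"
  by (auto simp: bump_def flat_exp_def)

lemma bump_eq_0: "x \<le> 0 \<or> 1 \<le> x \<Longrightarrow> bump x = 0"
  by (auto simp: bump_def flat_exp_def)

lemma bump_lower_bound:
  assumes "1/4 \<le> x" "x \<le> 3/4" shows "exp (-8) \<le> bump x"
proof -
  have flat_exp_ge: "exp (-4) \<le> flat_exp y" if "1/4 \<le> y" for y
  proof -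
    have "-4 \<le> -1/y" using that by (simp add: field_simps)
    then show ?thesis using that by (simp add: flat_exp_def)
  qed
  have "exp (-4) * exp (-4) \<le> flat_exp x * flat_exp (-1 * x + 1)"
    by (rule mult_mono) (use flat_exp_ge assms in \<open>auto simp: flat_exp_def\<close>)
  then show ?thesis by (simp add: bump_def flip: exp_add)
qed

lemma integrable_on_bump: "bump integrable_on {u..v}"
  by (rule integrable_continuous_interval) (rule smooth_continuous_on[OF smooth_bump])

lemma antiderivative_compact_support:
  fixes g :: "real \<Rightarrow> real"
  assumes cg: "continuous_on UNIV g" and ab: "a \<le> b"
    and z: "\<And>x. x \<le> a \<or> b \<le> x \<Longrightarrow> g x = 0"
  defines "G \<equiv> (\<lambda>x. integral {a..x} g)"
  shows "\<And>x. (G has_real_derivative g x) (at x)"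
    and "\<And>x. x \<le> a \<Longrightarrow> G x = 0"
    and "\<And>x. b \<le> x \<Longrightarrow> G x = integral {a..b} g"
proof -
  have int: "g integrable_on {u..v}" for u v
    by (rule integrable_continuous_interval) (use cg in \<open>auto intro: continuous_on_subset\<close>)
  have zero_int: "integral {u..v} g = 0" if "\<And>x. x \<in> {u..v} \<Longrightarrow> g x = 0" for u v
    using integral_cong[of "{u..v}" g "\<lambda>x. 0"] that by simp
  show G0: "G x = 0" if "x \<le> a" for x
  proof (cases "x = a")
    case True then show ?thesis using z[of a] by (simp add: G_def)
  next
    case False then show ?thesis using that by (simp add: G_def)
  qed
  show "G x = integral {a..b} g" if "b \<le> x" for x
  proof -
    have "integral {a..b} g + integral {b..x} g = integral {a..x} g"
      using Henstock_Kurzweil_Integration.integral_combine[OF ab that int] .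
    moreover have "integral {b..x} g = 0" by (rule zero_int) (use z in auto)
    ultimately show ?thesis by (simp add: G_def)
  qed
  fix x
  show "(G has_real_derivative g x) (at x)"
  proof (cases "x < a")
    case True
    have "(G has_real_derivative 0) (at x)"
      by (rule has_field_derivative_transform_within_open[where f="\<lambda>_. 0" and S="{..<a}"])
         (use True G0 in auto)
    then show ?thesis using z[of x] True by simp
  next
    case False
    define H where "H = (\<lambda>x. integral {a-1..x} g)"
    have GH: "G y = H y" if "a - 1 < y" for y
    proof (cases "a \<le> y")
      case True
      have "integral {a-1..a} g + integral {a..y} g = integral {a-1..y} g"
        using Henstock_Kurzweil_Integration.integral_combine[of "a-1" a y] True int by auto
      moreover have "integral {a-1..a} g = 0" by (rule zero_int) (use z in auto)
      ultimately show ?thesis by (simp add: G_def H_def)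
    next
      case False
      then show ?thesis using G0[of y] zero_int[of "a-1" y] z by (auto simp: H_def)
    qed
    have "(H has_real_derivative g x) (at x within {a-1..x+1})"
      unfolding H_def
      by (rule integral_has_real_derivative) (use cg False in \<open>auto intro: continuous_on_subset\<close>)
    moreover have "at x within {a-1..x+1} = at x"
      by (rule at_within_interior) (use False in auto)
    ultimately have "(H has_real_derivative g x) (at x)" by simp
    then show ?thesis
      by (rule has_field_derivative_transform_within_open[where S="{a-1<..}"]) (use False GH in auto)
  qed
qed

definition bump_mass :: real where "bump_mass = integral {0..1} bump"

lemma bump_mass_pos: "0 < bump_mass"
proof -
  have "integral {1/4..3/4::real} (\<lambda>x. exp (-8)) \<le> integral {1/4..3/4::real} bump"
    by (rule integral_le) (use integrable_on_bump bump_lower_bound in auto)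
  also have "\<dots> \<le> bump_mass" unfolding bump_mass_def
    by (rule integral_subset_le) (use integrable_on_bump bump_nonneg in auto)
  finally have "exp (-8) \<le> bump_mass * 2" by simp
  then show ?thesis using exp_gt_zero[of "-8::real"] by linarith
qed

definition smooth_step :: "real \<Rightarrow> real" where
  "smooth_step x = integral {0..x} bump / bump_mass"

lemma
  shows has_real_derivative_smooth_step: "\<And>x. (smooth_step has_real_derivative bump x / bump_mass) (at x)"
    and smooth_step_eq_0: "\<And>x. x \<le> 0 \<Longrightarrow> smooth_step x = 0"
    and smooth_step_eq_1: "\<And>x. 1 \<le> x \<Longrightarrow> smooth_step x = 1"
proof -
  note A = antiderivative_compact_support[OF smooth_continuous_on[OF smooth_bump] _ bump_eq_0,
      of 0 1, simplified]
  fix x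
  show "(smooth_step has_real_derivative bump x / bump_mass) (at x)"
    unfolding smooth_step_def by (rule DERIV_cdivide[OF A(1)])
  show "x \<le> 0 \<Longrightarrow> smooth_step x = 0" using A(2) by (simp add: smooth_step_def)
  show "1 \<le> x \<Longrightarrow> smooth_step x = 1"
  proof -
    assume "1 \<le> x"
    then have "integral {0..x} bump = bump_mass" using A(3) unfolding bump_mass_def by blast
    then show ?thesis using bump_mass_pos by (simp add: smooth_step_def)
  qed
qed

lemma smooth_smooth_step: "smooth smooth_step"
proof (rule smooth_antiderivative[OF has_real_derivative_smooth_step])
  have "(\<lambda>x. bump x / bump_mass) = (\<lambda>x. (1 / bump_mass) * bump x)" by auto
  then show "smooth (\<lambda>x. bump x / bump_mass)"
    using smooth_cmult[OF smooth_bump] by metis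
qed

lemma smooth_step_mono: assumes "x \<le> y" shows "smooth_step x \<le> smooth_step y"
proof (cases "x \<le> 0")
  case True
  have "0 \<le> integral {0..y} bump"
    by (rule integral_nonneg) (use integrable_on_bump bump_nonneg in auto)
  then show ?thesis using True smooth_step_eq_0 bump_mass_pos by (simp add: smooth_step_def)
next
  case False
  have "integral {0..x} bump \<le> integral {0..y} bump"
    by (rule integral_subset_le) (use integrable_on_bump bump_nonneg assms in auto)
  then show ?thesis using bump_mass_pos by (simp add: smooth_step_def divide_right_mono)
qed

lemma smooth_step_bounds: "0 \<le> smooth_step x" "smooth_step x \<le> 1"
proof -
  show "0 \<le> smooth_step x"
    using smooth_step_mono[of 0 x] smooth_step_eq_0[of x] smooth_step_eq_0[of 0] by (cases "x \<le> 0") auto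
  show "smooth_step x \<le> 1"
    using smooth_step_mono[of x 1] smooth_step_eq_1[of x] smooth_step_eq_1[of 1] by (cases "1 \<le> x") auto
qed

definition plateau :: "real \<Rightarrow> real \<Rightarrow> real \<Rightarrow> real \<Rightarrow> real" where
  "plateau c d n x = smooth_step (n * x + (- n * c)) - smooth_step (n * x + (1 - n * d))"

context
  fixes c d n :: real
  assumes n_pos: "0 < n" and n_large: "1 \<le> n * (d - c)"
begin

lemma smooth_plateau: "smooth (plateau c d n)"
  unfolding plateau_def by (intro smooth_diff smooth_affine smooth_smooth_step)

lemma plateau_eq_0: "x \<le> c \<or> d \<le> x \<Longrightarrow> plateau c d n x = 0"
proof (elim disjE)
  assume "x \<le> c"
  then have "n * x \<le> n * c" using n_pos by (intro mult_left_mono) auto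
  then have "n * x + (- n * c) \<le> 0" "n * x + (1 - n * d) \<le> 0"
    using n_large by (simp_all add: right_diff_distrib)
  then show ?thesis by (simp add: plateau_def smooth_step_eq_0)
next
  assume "d \<le> x"
  then have "n * d \<le> n * x" using n_pos by (intro mult_left_mono) auto
  then have "1 \<le> n * x + (- n * c)" "1 \<le> n * x + (1 - n * d)"
    using n_large by (simp_all add: right_diff_distrib)
  then show ?thesis by (simp add: plateau_def smooth_step_eq_1)
qed

lemma plateau_bounds: "0 \<le> plateau c d n x" "plateau c d n x \<le> 1"
proof -
  have "n * x + (1 - n * d) \<le> n * x + (- n * c)" using n_large by (simp add: right_diff_distrib)
  then show "0 \<le> plateau c d n x" using smooth_step_mono by (simp add: plateau_def)
  show "plateau c d n x \<le> 1"
    using smooth_step_bounds[of "n * x + (- n * c)"] smooth_step_bounds[of "n * x + (1 - n * d)"]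
    by (simp add: plateau_def)
qed

lemma plateau_eq_1:
  assumes "c + 1/n \<le> x" "x \<le> d - 1/n"
  shows "plateau c d n x = 1"
proof -
  have "n * (c + 1/n) \<le> n * x" "n * x \<le> n * (d - 1/n)"
    using assms n_pos by (intro mult_left_mono; simp)+
  moreover have "n * (c + 1/n) = n * c + 1" "n * (d - 1/n) = n * d - 1"
    using n_pos by (simp_all add: field_simps)
  ultimately have "1 \<le> n * x + (- n * c)" "n * x + (1 - n * d) \<le> 0"
    by linarith+
  then show ?thesis by (simp add: plateau_def smooth_step_eq_0 smooth_step_eq_1)
qed

end

lemma test_funI:
  assumes "smooth \<phi>" "-1 < a" "b < 1" "\<And>x. x \<notin> {a..b} \<Longrightarrow> \<phi> x = 0"
  shows "test_fun \<phi>"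
  using assms unfolding test_fun_def smooth_def differentiable_upto_iff by (metis lessI)

lemma test_funE:
  assumes "test_fun \<phi>"
  obtains a b where "-1 < a" "b < 1" "\<And>x. x \<notin> {a..b} \<Longrightarrow> \<phi> x = 0"
  using assms unfolding test_fun_def by blast

lemma test_fun_smooth: "test_fun \<phi> \<Longrightarrow> smooth \<phi>"
  unfolding test_fun_def smooth_def differentiable_upto_iff by blast

lemma test_fun_cmult:
  assumes "test_fun \<phi>" shows "test_fun (\<lambda>x. c * \<phi> x)"
proof -
  obtain a b where "-1 < a" "b < 1" "\<And>x. x \<notin> {a..b} \<Longrightarrow> \<phi> x = 0"
    using test_funE[OF assms] by blast
  then show ?thesis by (intro test_funI[OF smooth_cmult[OF test_fun_smooth[OF assms]]]) auto
qed

lemma test_fun_diff: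
  assumes "test_fun \<phi>" "test_fun \<psi>"
  shows "test_fun (\<lambda>x. \<phi> x - \<psi> x)"
proof -
  obtain a b where ab: "-1 < a" "b < 1" "\<And>x. x \<notin> {a..b} \<Longrightarrow> \<phi> x = 0"
    using test_funE[OF assms(1)] by blast
  obtain a' b' where ab': "-1 < a'" "b' < 1" "\<And>x. x \<notin> {a'..b'} \<Longrightarrow> \<psi> x = 0"
    using test_funE[OF assms(2)] by blast
  have "\<phi> x - \<psi> x = 0" if "x \<notin> {min a a'..max b b'}" for x
  proof -
    have "x \<notin> {a..b}" "x \<notin> {a'..b'}" using that by auto
    then show ?thesis using ab(3) ab'(3) by simp
  qed
  moreover have "smooth (\<lambda>x. \<phi> x - \<psi> x)"
    using smooth_diff[OF test_fun_smooth[OF assms(1)] test_fun_smooth[OF assms(2)]] .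
  ultimately show ?thesis
    using ab ab' by (intro test_funI[where a="min a a'" and b="max b b'"]) auto
qed

lemma test_fun_plateau:
  assumes "0 < n" "1 \<le> n * (d - c)" "-1 < c" "d < 1"
  shows "test_fun (plateau c d n)"
  using plateau_eq_0[OF assms(1,2)] assms(3,4)
  by (intro test_funI[OF smooth_plateau[OF assms(1,2)]]) auto

lemma deriv_eq_0_outside:
  fixes \<phi> :: "real \<Rightarrow> real"
  assumes "\<And>x. x \<notin> {a..b} \<Longrightarrow> \<phi> x = 0" "x \<notin> {a..b}"
  shows "deriv \<phi> x = 0"
proof -
  have "(\<phi> has_real_derivative 0) (at x)"
    by (rule has_field_derivative_transform_within_open[where f="\<lambda>_. 0" and S="- {a..b}"])
       (use assms in auto)
  then show ?thesis by (rule DERIV_imp_deriv)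
qed

lemma test_fun_deriv:
  assumes "test_fun \<phi>" shows "test_fun (deriv \<phi>)"
proof -
  obtain a b where ab: "-1 < a" "b < 1" "\<And>x. x \<notin> {a..b} \<Longrightarrow> \<phi> x = 0"
    using test_funE[OF assms] by blast
  show ?thesis
    by (rule test_funI[OF smooth_deriv[OF test_fun_smooth[OF assms]] ab(1,2)])
       (rule deriv_eq_0_outside[OF ab(3)])
qed

lemma test_fun_bounded:
  assumes "test_fun \<phi>" obtains B where "\<And>x. \<bar>\<phi> x\<bar> \<le> B"
proof -
  obtain a b where ab: "\<And>x. x \<notin> {a..b} \<Longrightarrow> \<phi> x = 0"
    using test_funE[OF assms] by blast
  have "bounded (\<phi> ` {a..b})"
    by (intro compact_imp_bounded compact_continuous_image compact_Icc
        smooth_continuous_on test_fun_smooth assms)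
  then obtain B where B: "\<And>y. y \<in> \<phi> ` {a..b} \<Longrightarrow> norm y \<le> B" by (auto simp: bounded_iff)
  have "\<bar>\<phi> x\<bar> \<le> max B 0" for x
    using B[of "\<phi> x"] ab[of x] by (cases "x \<in> {a..b}") auto
  then show ?thesis using that by blast
qed

lemma test_fun_antiderivative:
  assumes g: "test_fun g" and g_int: "(LBINT x:I01. g x) = 0"
  obtains G where "test_fun G" "deriv G = g"
proof -
  obtain a0 b0 where ab0: "-1 < a0" "b0 < 1" "\<And>x. x \<notin> {a0..b0} \<Longrightarrow> g x = 0"
    using test_funE[OF g] by blast
  define a where "a = (min a0 0 - 1) / 2"
  define b where "b = (max b0 0 + 1) / 2"
  have ab: "-1 < a" "a < a0" "b0 < b" "b < 1" "a \<le> b"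
    using ab0 by (auto simp: a_def b_def)
  have g0: "g x = 0" if "x \<le> a \<or> b \<le> x" for x
    using ab ab0(3)[of x] that by auto
  have cg: "continuous_on UNIV g" by (intro smooth_continuous_on test_fun_smooth g)
  note G = antiderivative_compact_support[OF cg \<open>a \<le> b\<close> g0]
  have "integral {a..b} g = (LBINT x:{a..b}. g x)"
    by (intro set_borel_integral_eq_integral(2)[symmetric] borel_integrable_atLeastAtMost'
        smooth_continuous_on test_fun_smooth g)
  also have "\<dots> = (LBINT x:I01. g x)"
    unfolding set_lebesgue_integral_def
  proof (rule Bochner_Integration.integral_cong[OF refl])
    fix x
    show "indicator {a..b} x *\<^sub>R g x = indicator I01 x *\<^sub>R g x"
      using g0[of x] ab by (cases "x \<le> a \<or> b \<le> x") (auto simp: indicator_def)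
  qed
  finally have "integral {a..b} g = 0" using g_int by simp
  have "test_fun (\<lambda>x. integral {a..x} g)"
  proof (rule test_funI)
    show "smooth (\<lambda>x. integral {a..x} g)"
      by (rule smooth_antiderivative[OF G(1) test_fun_smooth[OF g]])
    show "integral {a..x} g = 0" if "x \<notin> {a..b}" for x
      using G(2)[of x] G(3)[of x] \<open>integral {a..b} g = 0\<close> that by fastforce
  qed (use ab in auto)
  moreover have "deriv (\<lambda>x. integral {a..x} g) = g"
    using G(1) by (auto intro!: ext DERIV_imp_deriv)
  ultimately show ?thesis using that by blast
qed

lemma set_integrable_const_I01: "set_integrable lborel I01 (\<lambda>x. c :: real)"
  by (simp add: set_integrable_def integrable_indicator_iff)

lemma set_integrable_Icc_if_I01:
  "set_integrable lborel I01 (k :: real \<Rightarrow> real) \<Longrightarrow> set_integrable lborel {-1..1} k"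
proof -
  have "set_integrable lborel I01 k \<longleftrightarrow> set_integrable lborel {-1..1} k"
    by (rule set_integrable_discrete_difference[where X="{-1,1}"]) auto
  then show "set_integrable lborel I01 k \<Longrightarrow> set_integrable lborel {-1..1} k" by simp
qed

lemma L2_I_imp_set_integrable:
  assumes "L2_I f" shows "set_integrable lborel I01 f"
proof -
  have m: "set_borel_measurable lborel I01 f" and sq: "set_integrable lborel I01 (\<lambda>x. (f x)\<^sup>2)"
    using assms by (auto simp: L2_I_def)
  have "set_integrable lborel I01 (\<lambda>x. 1 + (f x)\<^sup>2)"
    using sq set_integrable_const_I01[of 1] by (rule set_integral_add(1)[rotated])
  moreover have "\<bar>f x\<bar> \<le> \<bar>1 + (f x)\<^sup>2\<bar>" for x
  proof -
    have "0 \<le> (\<bar>f x\<bar> - 1)\<^sup>2" by simp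
    then show ?thesis by (simp add: power2_eq_square algebra_simps abs_mult_self_eq)
  qed
  ultimately show ?thesis
    by (intro set_integrable_bound[OF _ m]) auto
qed

lemma set_integrable_mult_bounded:
  fixes h \<phi> :: "real \<Rightarrow> real"
  assumes "set_integrable lborel A h" "\<phi> \<in> borel_measurable borel" "\<And>x. \<bar>\<phi> x\<bar> \<le> B"
  shows "set_integrable lborel A (\<lambda>x. h x * \<phi> x)"
proof -
  have "integrable lborel (\<lambda>x. B * (indicator A x * h x))"
    using assms(1) unfolding set_integrable_def by simp
  then show ?thesis
    unfolding set_integrable_def
  proof (rule Bochner_Integration.integrable_bound)
    show "(\<lambda>x. indicator A x *\<^sub>R (h x * \<phi> x)) \<in> borel_measurable lborel"
      using assms(1,2) unfolding set_integrable_def by (simp add: mult.assoc[symmetric])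
    have "\<bar>indicator A x * h x\<bar> * \<bar>\<phi> x\<bar> \<le> \<bar>indicator A x * h x\<bar> * \<bar>B\<bar>" for x
      by (rule mult_left_mono) (use assms(3)[of x] in auto)
    then show "AE x in lborel. norm (indicator A x *\<^sub>R (h x * \<phi> x)) \<le> norm (B * (indicator A x * h x))"
      by (simp add: abs_mult mult_ac)
  qed
qed

lemma set_integrable_mult_test_fun:
  assumes "test_fun \<phi>" "set_integrable lborel A h"
  shows "set_integrable lborel A (\<lambda>x. h x * \<phi> x)"
proof -
  obtain B where "\<And>x. \<bar>\<phi> x\<bar> \<le> B" using test_fun_bounded[OF assms(1)] by blast
  then show ?thesis
    by (rule set_integrable_mult_bounded[OF assms(2) smooth_borel_measurable[OF test_fun_smooth[OF assms(1)]]])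
qed

section \<open>The fundamental lemma of the calculus of variations\<close>

lemma emeasure_density_pos_part:
  fixes v :: "real \<Rightarrow> real"
  assumes v: "integrable lborel v" and A: "A \<in> sets borel"
  shows "emeasure (density lborel (\<lambda>x. ennreal (v x))) A
    = ennreal (\<integral>x. indicator A x * max 0 (v x) \<partial>lborel)"
proof -
  have [measurable]: "v \<in> borel_measurable borel" "A \<in> sets borel" using v A by auto
  have "integrable lborel (\<lambda>x. indicator A x * max 0 (v x))"
    by (rule Bochner_Integration.integrable_bound[OF integrable_norm[OF v]])
       (auto simp: indicator_def)
  moreover have "emeasure (density lborel (\<lambda>x. ennreal (v x))) A
      = (\<integral>\<^sup>+ x. ennreal (indicator A x * max 0 (v x)) \<partial>lborel)"
    by (subst emeasure_density) (auto intro!: nn_integral_cong simp: indicator_def max_def ennreal_neg)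
  ultimately show ?thesis
    by (simp add: nn_integral_eq_integral)
qed

lemma AE_zero_if_ray_integrals_zero:
  fixes v :: "real \<Rightarrow> real"
  assumes v: "integrable lborel v"
    and rays: "\<And>a. (\<integral>x. indicator {a<..} x * v x \<partial>lborel) = 0"
  shows "AE x in lborel. v x = 0"
proof -
  have [measurable]: "v \<in> borel_measurable borel" using v by auto
  have v_minus: "integrable lborel (\<lambda>x. - v x)" using v by simp
  define p where "p x = max 0 (v x)" for x
  define q where "q x = max 0 (- v x)" for x
  have ip: "integrable lborel (\<lambda>x. indicator {a<..} x * p x)" for a
    by (rule Bochner_Integration.integrable_bound[OF integrable_norm[OF v]])
       (auto simp: p_def indicator_def)
  have iq: "integrable lborel (\<lambda>x. indicator {a<..} x * q x)" for a
    by (rule Bochner_Integration.integrable_bound[OF integrable_norm[OF v]])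
       (auto simp: q_def indicator_def)
  have pq: "(\<integral>x. indicator {a<..} x * p x \<partial>lborel) = (\<integral>x. indicator {a<..} x * q x \<partial>lborel)" for a
  proof -
    have "(\<integral>x. indicator {a<..} x * p x \<partial>lborel) - (\<integral>x. indicator {a<..} x * q x \<partial>lborel)
        = (\<integral>x. indicator {a<..} x * p x - indicator {a<..} x * q x \<partial>lborel)"
      using Bochner_Integration.integral_diff[OF ip iq] by simp
    also have "\<dots> = (\<integral>x. indicator {a<..} x * v x \<partial>lborel)"
      by (rule Bochner_Integration.integral_cong) (auto simp: p_def q_def indicator_def max_def)
    finally show ?thesis using rays[of a] by simp
  qed
  have "density lborel (\<lambda>x. ennreal (v x)) = density lborel (\<lambda>x. ennreal (- v x))"
    by (rule measure_eqI_lessThan)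
       (auto simp: emeasure_density_pos_part[OF v] emeasure_density_pos_part[OF v_minus]
          pq[unfolded p_def q_def])
  then have "AE x in lborel. ennreal (v x) = ennreal (- v x)"
    by (intro sigma_finite_measure.density_unique[OF sigma_finite_lborel]) auto
  then show ?thesis
  proof eventually_elim
    case (elim x)
    have "ennreal (v x) = 0 \<or> ennreal (- v x) = 0" by (auto simp: ennreal_eq_0_iff)
    then have "ennreal (v x) = 0" "ennreal (- v x) = 0" using elim by auto
    then have "v x \<le> 0" "- v x \<le> 0" by (simp_all only: ennreal_eq_0_iff)
    then show "v x = 0" by linarith
  qed
qed

lemma plateau_tendsto_indicator:
  assumes "c < d"
  shows "(\<lambda>i. plateau c d ((real i + 1) / (d - c)) x) \<longlonglongrightarrow> indicator {c<..<d} x"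
proof -
  define n where "n i = (real i + 1) / (d - c)" for i :: nat
  have n: "0 < n i" "1 \<le> n i * (d - c)" for i using assms by (simp_all add: n_def)
  have "eventually (\<lambda>i. plateau c d (n i) x = indicator {c<..<d} x) sequentially"
  proof (cases "x \<in> {c<..<d}")
    case False
    then show ?thesis using plateau_eq_0[OF n] by (auto simp: indicator_def)
  next
    case True
    have "(\<lambda>i. (d - c) * inverse (real (Suc i))) \<longlonglongrightarrow> (d - c) * 0"
      by (intro tendsto_mult tendsto_const LIMSEQ_inverse_real_of_nat)
    moreover have "(d - c) * 0 < min (x - c) (d - x)" using True by simp
    ultimately have "eventually (\<lambda>i. (d - c) * inverse (real (Suc i)) < min (x - c) (d - x)) sequentially"
      by (rule order_tendstoD(2))
    then show ?thesis
    proof eventually_elim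
      case (elim i)
      have "1 / n i = (d - c) * inverse (real (Suc i))" using assms by (simp add: n_def field_simps)
      then have "plateau c d (n i) x = 1" using elim by (intro plateau_eq_1[OF n]) auto
      then show ?case using True by simp
    qed
  qed
  then show ?thesis unfolding n_def by (rule tendsto_eventually)
qed

lemma interval_integral_zero_if_orthogonal_to_tests:
  fixes u :: "real \<Rightarrow> real"
  assumes u: "set_integrable lborel I01 u"
    and orth: "\<And>\<phi>. test_fun \<phi> \<Longrightarrow> (LBINT x:I01. u x * \<phi> x) = 0"
    and cd: "-1 < c" "c < d" "d < 1"
  shows "(\<integral>x. indicator {c<..<d} x * u x \<partial>lborel) = 0"
proof -
  define n where "n i = (real i + 1) / (d - c)" for i :: nat
  have n: "0 < n i" "1 \<le> n i * (d - c)" for i using cd by (simp_all add: n_def)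
  define U where "U x = indicator I01 x * u x" for x
  have U: "integrable lborel U" "U \<in> borel_measurable borel"
    using u unfolding set_integrable_def U_def[abs_def] by auto
  have "(\<lambda>i. \<integral>x. U x * plateau c d (n i) x \<partial>lborel) \<longlonglongrightarrow> (\<integral>x. U x * indicator {c<..<d} x \<partial>lborel)"
  proof (rule integral_dominated_convergence[where w="\<lambda>x. \<bar>U x\<bar>"])
    show "(\<lambda>x. U x * plateau c d (n i) x) \<in> borel_measurable lborel" for i
      using U smooth_borel_measurable[OF smooth_plateau[OF n]] by simp
    show "AE x in lborel. norm (U x * plateau c d (n i) x) \<le> \<bar>U x\<bar>" for i
      using plateau_bounds[OF n] by (intro AE_I2) (simp add: abs_mult mult_left_le)
    show "AE x in lborel. (\<lambda>i. U x * plateau c d (n i) x) \<longlonglongrightarrow> U x * indicator {c<..<d} x"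
      using plateau_tendsto_indicator[OF cd(2)] unfolding n_def by (intro AE_I2 tendsto_mult_left)
  qed (use U in auto)
  moreover have "(\<integral>x. U x * plateau c d (n i) x \<partial>lborel) = 0" for i
    using orth[OF test_fun_plateau[OF n cd(1,3)]]
    by (simp add: U_def set_lebesgue_integral_def mult.assoc)
  moreover have "U x * indicator {c<..<d} x = indicator {c<..<d} x * u x" for x
    using cd by (auto simp: U_def indicator_def)
  ultimately show ?thesis using LIMSEQ_unique by (simp add: LIMSEQ_const_iff)
qed

theorem AE_zero_if_orthogonal_to_tests:
  fixes u :: "real \<Rightarrow> real"
  assumes u: "set_integrable lborel I01 u"
    and orth: "\<And>\<phi>. test_fun \<phi> \<Longrightarrow> (LBINT x:I01. u x * \<phi> x) = 0"
  shows "AE x in lborel. x \<in> I01 \<longrightarrow> u x = 0"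
proof -
  define c where "c m = -1 + 1 / (real m + 2)" for m :: nat
  define d where "d m = 1 - 1 / (real m + 2)" for m :: nat
  have cd: "-1 < c m" "c m < d m" "d m < 1" for m
  proof -
    have "0 < 1 / (real m + 2)" "1 / (real m + 2) < 1" by (simp_all add: divide_less_eq)
    then show "-1 < c m" "c m < d m" "d m < 1" unfolding c_def d_def by linarith+
  qed
  have U: "(\<lambda>x. indicator I01 x * u x) \<in> borel_measurable borel"
    "integrable lborel (\<lambda>x. indicator I01 x * u x)"
    using u unfolding set_integrable_def by auto
  have on_intervals: "AE x in lborel. indicator {c m<..<d m} x * u x = 0" for m
  proof (rule AE_zero_if_ray_integrals_zero)
    have restrict: "indicator {c m<..<d m} x * u x = indicator {c m<..<d m} x * (indicator I01 x * u x)" for x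
      using cd[of m] by (auto simp: indicator_def)
    show "integrable lborel (\<lambda>x. indicator {c m<..<d m} x * u x)"
      unfolding restrict
      by (rule Bochner_Integration.integrable_bound[OF U(2)]) (use U(1) in \<open>auto simp: indicator_def\<close>)
    fix a
    have "(\<lambda>x. indicator {a<..} x * (indicator {c m<..<d m} x * u x))
        = (\<lambda>x. indicator {max a (c m)<..<d m} x * u x)"
      by (auto simp: indicator_def)
    moreover have "(\<integral>x. indicator {max a (c m)<..<d m} x * u x \<partial>lborel) = 0"
    proof (cases "max a (c m) < d m")
      case True
      show ?thesis by (rule interval_integral_zero_if_orthogonal_to_tests[OF u orth]) (use cd[of m] True in auto)
    qed auto
    ultimately show "(\<integral>x. indicator {a<..} x * (indicator {c m<..<d m} x * u x) \<partial>lborel) = 0"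
      by simp
  qed
  have "AE x in lborel. \<forall>m. indicator {c m<..<d m} x * u x = 0"
    by (rule AE_all_countable[THEN iffD2]) (rule allI, rule on_intervals)
  then show ?thesis
  proof eventually_elim
    case (elim x)
    show ?case
    proof
      assume x: "x \<in> I01"
      then have "0 < min (x + 1) (1 - x)" by simp
      then obtain m where m: "inverse (real (Suc m)) < min (x + 1) (1 - x)"
        using reals_Archimedean by blast
      have "1 / (real m + 2) \<le> inverse (real (Suc m))" by (simp add: field_simps)
      then have "x \<in> {c m<..<d m}" using m by (auto simp: c_def d_def)
      then show "u x = 0" using elim[rule_format, of m] by simp
    qed
  qed
qed

lemma test_fun_set_integrable: "test_fun \<phi> \<Longrightarrow> set_integrable lborel I01 \<phi>"
  using set_integrable_mult_test_fun[OF _ set_integrable_const_I01[of 1]] by simp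

lemma exists_test_fun_integral_1:
  obtains \<phi> where "test_fun \<phi>" "(LBINT x:I01. \<phi> x) = 1"
proof -
  have n: "(0::real) < 8" "1 \<le> 8 * (1/2 - (0::real))" by auto
  define \<phi> where "\<phi> = plateau 0 (1/2) 8"
  have \<phi>: "test_fun \<phi>" unfolding \<phi>_def by (rule test_fun_plateau[OF n]) auto
  have "(\<integral>x. indicator {1/8..3/8::real} x \<partial>lborel) \<le> (\<integral>x. indicator I01 x * \<phi> x \<partial>lborel)"
  proof (rule integral_mono)
    show "integrable lborel (\<lambda>x. indicator I01 x * \<phi> x)"
      using test_fun_set_integrable[OF \<phi>] by (simp add: set_integrable_def)
    show "indicator {1/8..3/8::real} x \<le> indicator I01 x * \<phi> x" for x
      using plateau_eq_1[OF n, of x] plateau_bounds[OF n, of x] by (auto simp: \<phi>_def indicator_def)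
  qed simp
  then have pos: "0 < (LBINT x:I01. \<phi> x)" by (simp add: set_lebesgue_integral_def)
  show ?thesis
  proof (rule that)
    show "test_fun (\<lambda>x. (1 / (LBINT x:I01. \<phi> x)) * \<phi> x)" by (rule test_fun_cmult[OF \<phi>])
    show "(LBINT x:I01. (1 / (LBINT x:I01. \<phi> x)) * \<phi> x) = 1" using pos by simp
  qed
qed

theorem du_Bois_Reymond:
  fixes h :: "real \<Rightarrow> real"
  assumes h: "set_integrable lborel I01 h"
    and orth: "\<And>\<phi>. test_fun \<phi> \<Longrightarrow> (LBINT x:I01. h x * deriv \<phi> x) = 0"
  obtains A where "AE x in lborel. x \<in> I01 \<longrightarrow> h x = A"
proof -
  obtain \<phi>0 where \<phi>0: "test_fun \<phi>0" "(LBINT x:I01. \<phi>0 x) = 1"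
    by (rule exists_test_fun_integral_1)
  define A where "A = (LBINT x:I01. h x * \<phi>0 x)"
  have "(LBINT x:I01. (h x - A) * \<psi> x) = 0" if \<psi>: "test_fun \<psi>" for \<psi>
  proof -
    define P where "P = (LBINT x:I01. \<psi> x)"
    note integrable = test_fun_set_integrable set_integrable_mult_test_fun[OF _ h]
    have g: "test_fun (\<lambda>x. \<psi> x - P * \<phi>0 x)" by (intro test_fun_diff test_fun_cmult \<psi> \<phi>0(1))
    have "(LBINT x:I01. \<psi> x - P * \<phi>0 x) = 0"
      using \<phi>0 integrable[OF \<psi>] integrable[OF \<phi>0(1)] by (simp add: P_def)
    then obtain G where G: "test_fun G" "deriv G = (\<lambda>x. \<psi> x - P * \<phi>0 x)"
      using test_fun_antiderivative[OF g] by blast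
    have "0 = (LBINT x:I01. h x * (\<psi> x - P * \<phi>0 x))" using orth[OF G(1)] by (simp add: G(2))
    also have "\<dots> = (LBINT x:I01. h x * \<psi> x) - P * A"
      using integrable[OF \<psi>] integrable[OF \<phi>0(1)] by (simp add: A_def right_diff_distrib mult.left_commute)
    also have "\<dots> = (LBINT x:I01. h x * \<psi> x - A * \<psi> x)"
      using integrable[OF \<psi>] by (simp add: P_def)
    finally show ?thesis by (simp add: left_diff_distrib)
  qed
  then have "AE x in lborel. x \<in> I01 \<longrightarrow> h x - A = 0"
    by (intro AE_zero_if_orthogonal_to_tests) (use h set_integrable_const_I01 in auto)
  then show ?thesis using that by auto
qed

section \<open>Weak derivatives and indefinite integrals\<close>

lemma integral_deriv_test_fun_Icc:
  assumes \<phi>: "test_fun \<phi>"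
  shows "(\<integral>x. indicator {s..1} x * deriv \<phi> x \<partial>lborel) = - \<phi> s"
proof -
  obtain a b where ab: "-1 < a" "b < 1" "\<And>x. x \<notin> {a..b} \<Longrightarrow> \<phi> x = 0"
    using test_funE[OF \<phi>] by blast
  show ?thesis
  proof (cases "s \<le> 1")
    case True
    have "(\<integral>x. indicator {s..1} x *\<^sub>R deriv \<phi> x \<partial>lborel) = \<phi> 1 - \<phi> s"
    proof (rule integral_FTC_atLeastAtMost[OF True])
      show "(\<phi> has_vector_derivative deriv \<phi> x) (at x within {s..1})" for x
        using smooth_has_real_derivative[OF test_fun_smooth[OF \<phi>], of x]
        by (auto simp: has_real_derivative_iff_has_vector_derivative intro: has_vector_derivative_at_within)
      show "continuous_on {s..1} (deriv \<phi>)"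
        by (rule smooth_continuous_on[OF smooth_deriv[OF test_fun_smooth[OF \<phi>]]])
    qed
    then show ?thesis using ab(2) ab(3)[of 1] by simp
  next
    case False
    then show ?thesis using ab(2) ab(3)[of s] by simp
  qed
qed

text \<open>By Fubini on the triangle \<open>-1 \<le> s \<le> x \<le> 1\<close>.\<close>

lemma set_integral_indefinite_integral_mult_deriv:
  fixes k :: "real \<Rightarrow> real"
  assumes k: "set_integrable lborel I01 k" and \<phi>: "test_fun \<phi>"
  shows "(LBINT x:I01. integral {-1..x} k * deriv \<phi> x) = - (LBINT x:I01. k x * \<phi> x)"
proof -
  obtain a b where ab: "-1 < a" "b < 1" "\<And>x. x \<notin> {a..b} \<Longrightarrow> \<phi> x = 0"
    using test_funE[OF \<phi>] by blast
  have endpoints: "\<phi> x = 0" "deriv \<phi> x = 0" if "x = -1 \<or> x = 1" for x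
    using ab that deriv_eq_0_outside[OF ab(3)] by auto
  obtain B where B: "\<And>x. \<bar>deriv \<phi> x\<bar> \<le> B" using test_fun_bounded[OF test_fun_deriv[OF \<phi>]] by blast
  have k_Icc: "set_integrable lborel {-1..1} k" using set_integrable_Icc_if_I01[OF k] .
  define kt where "kt s = indicator {-1..1} s * k s" for s
  have kt: "integrable lborel kt" using k_Icc by (simp add: kt_def[abs_def] set_integrable_def)
  have [measurable]: "kt \<in> borel_measurable borel" "deriv \<phi> \<in> borel_measurable borel"
    using kt smooth_borel_measurable[OF smooth_deriv[OF test_fun_smooth[OF \<phi>]]] by auto
  define F where "F s x = kt s * (indicator I01 x * deriv \<phi> x * (if s \<le> x then 1 else 0))" for s x :: real
  have F: "integrable (lborel \<Otimes>\<^sub>M lborel) (\<lambda>(s, x). F s x)"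
  proof (rule Bochner_Integration.integrable_bound)
    show "integrable (lborel \<Otimes>\<^sub>M lborel) (\<lambda>(s, x). \<bar>kt s\<bar> * (indicator I01 x * B))"
    proof (rule lborel_pair.Fubini_integrable)
      have "(\<lambda>s. \<integral>x. norm (\<bar>kt s\<bar> * (indicator I01 x * B)) \<partial>lborel)
          = (\<lambda>s. \<bar>kt s\<bar> * (\<integral>x. \<bar>indicator I01 x * B\<bar> \<partial>lborel))"
        by (auto simp: abs_mult)
      then show "integrable lborel (\<lambda>s. \<integral>x. norm (case (s, x) of (s, x) \<Rightarrow> \<bar>kt s\<bar> * (indicator I01 x * B)) \<partial>lborel)"
        using kt by (simp add: integrable_abs)
    qed (auto simp: integrable_indicator_iff)
    show "(\<lambda>(s, x). F s x) \<in> borel_measurable (lborel \<Otimes>\<^sub>M lborel)" unfolding F_def by measurable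
    have "\<bar>F s x\<bar> \<le> \<bar>kt s\<bar> * (indicator I01 x * B)" for s x
      unfolding F_def abs_mult using B[of x] by (intro mult_left_mono) (auto simp: indicator_def)
    then show "AE p in lborel \<Otimes>\<^sub>M lborel.
        norm (case p of (s, x) \<Rightarrow> F s x) \<le> norm (case p of (s, x) \<Rightarrow> \<bar>kt s\<bar> * (indicator I01 x * B))"
      using order_trans[OF _ abs_ge_self] by (auto intro!: AE_I2)
  qed
  have inner_s: "(\<integral>s. F s x \<partial>lborel) = indicator I01 x * (integral {-1..x} k * deriv \<phi> x)" for x
  proof (cases "x \<in> I01")
    case True
    have "set_integrable lborel {-1..x} k"
      by (rule set_integrable_subset[OF k_Icc]) (use True in auto)
    from set_borel_integral_eq_integral(2)[OF this]
    have "(\<integral>s. indicator {-1..x} s * k s \<partial>lborel) = integral {-1..x} k"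
      by (simp add: set_lebesgue_integral_def)
    moreover have "(\<integral>s. F s x \<partial>lborel) = (\<integral>s. indicator {-1..x} s * k s * deriv \<phi> x \<partial>lborel)"
      by (rule Bochner_Integration.integral_cong) (use True in \<open>auto simp: F_def kt_def indicator_def\<close>)
    ultimately show ?thesis using True by simp
  qed (simp add: F_def)
  have inner_x: "(\<integral>x. F s x \<partial>lborel) = - (indicator I01 s * k s * \<phi> s)" for s
  proof -
    have "(\<integral>x. F s x \<partial>lborel) = (\<integral>x. kt s * (indicator {s..1} x * deriv \<phi> x) \<partial>lborel)"
    proof (rule Bochner_Integration.integral_cong[OF refl])
      fix x
      show "F s x = kt s * (indicator {s..1} x * deriv \<phi> x)"
        using endpoints[of x] by (cases "x = -1 \<or> x = 1") (auto simp: F_def kt_def indicator_def)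
    qed
    also have "\<dots> = - (indicator I01 s * k s * \<phi> s)"
      using integral_deriv_test_fun_Icc[OF \<phi>, of s] endpoints[of s]
      by (cases "s = -1 \<or> s = 1") (auto simp: kt_def indicator_def)
    finally show ?thesis .
  qed
  have "(LBINT x:I01. integral {-1..x} k * deriv \<phi> x) = (\<integral>x. (\<integral>s. F s x \<partial>lborel) \<partial>lborel)"
    by (simp add: inner_s set_lebesgue_integral_def)
  also have "\<dots> = (\<integral>s. (\<integral>x. F s x \<partial>lborel) \<partial>lborel)"
    by (rule lborel_pair.Fubini_integral[OF F])
  also have "\<dots> = - (LBINT x:I01. k x * \<phi> x)"
    by (simp add: inner_x set_lebesgue_integral_def mult.assoc)
  finally show ?thesis .
qed

lemma AE_eq_indefinite_integral_if_weak_deriv: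
  fixes h h' :: "real \<Rightarrow> real"
  assumes h: "set_integrable lborel I01 h" and h': "set_integrable lborel I01 h'"
    and weak: "\<And>\<phi>. test_fun \<phi> \<Longrightarrow> (LBINT x:I01. h x * deriv \<phi> x) = - (LBINT x:I01. h' x * \<phi> x)"
  obtains c where "AE x in lborel. x \<in> I01 \<longrightarrow> h x = c + integral {-1..x} h'"
proof -
  define K where "K x = integral {-1..x} h'" for x
  have "h' integrable_on {-1..1}"
    using set_borel_integral_eq_integral(1)[OF set_integrable_Icc_if_I01[OF h']] .
  then have "continuous_on {-1..1} K" unfolding K_def by (rule indefinite_integral_continuous_1)
  then have K: "set_integrable lborel I01 K"
    by (rule set_integrable_subset[OF borel_integrable_atLeastAtMost']) auto
  have "(LBINT x:I01. (h x - K x) * deriv \<phi> x) = 0" if \<phi>: "test_fun \<phi>" for \<phi>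
  proof -
    note integrable = set_integrable_mult_test_fun[OF test_fun_deriv[OF \<phi>]]
    have "(LBINT x:I01. (h x - K x) * deriv \<phi> x)
        = (LBINT x:I01. h x * deriv \<phi> x) - (LBINT x:I01. K x * deriv \<phi> x)"
      using integrable[OF h] integrable[OF K] by (simp add: left_diff_distrib)
    then show ?thesis
      using weak[OF \<phi>] set_integral_indefinite_integral_mult_deriv[OF h' \<phi>] by (simp add: K_def)
  qed
  then obtain A where "AE x in lborel. x \<in> I01 \<longrightarrow> h x - K x = A"
    using du_Bois_Reymond[OF set_integral_diff(1)[OF h K]] by blast
  then have "AE x in lborel. x \<in> I01 \<longrightarrow> h x = A + integral {-1..x} h'"
    by eventually_elim (auto simp: K_def)
  then show ?thesis by (rule that)
qed

lemma weak_deriv_Suc: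
  assumes "weak_deriv j v g" "weak_deriv (Suc j) v g'" "test_fun \<phi>"
  shows "(LBINT x:I01. g x * deriv \<phi> x) = - (LBINT x:I01. g' x * \<phi> x)"
proof -
  have "(deriv ^^ Suc j) \<phi> = (deriv ^^ j) (deriv \<phi>)"
    by (simp add: funpow_Suc_right del: funpow.simps)
  moreover have "(LBINT x:I01. v x * (deriv ^^ j) (deriv \<phi>) x) = (-1) ^ j * (LBINT x:I01. g x * deriv \<phi> x)"
    using assms(1) test_fun_deriv[OF assms(3)] unfolding weak_deriv_def by blast
  moreover have "(LBINT x:I01. v x * (deriv ^^ Suc j) \<phi> x) = (-1) ^ Suc j * (LBINT x:I01. g' x * \<phi> x)"
    using assms(2,3) unfolding weak_deriv_def by blast
  ultimately have "(-1) ^ j * (LBINT x:I01. g x * deriv \<phi> x) = (-1) ^ j * - (LBINT x:I01. g' x * \<phi> x)"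
    by simp
  moreover have "(-1::real) ^ j \<noteq> 0" by simp
  ultimately show ?thesis using mult_left_cancel by blast
qed

lemma integral_Icc_cong_AE:
  fixes g W :: "real \<Rightarrow> real"
  assumes g: "set_integrable lborel I01 g" and W: "continuous_on {-1..1} W"
    and ae: "AE x in lborel. x \<in> I01 \<longrightarrow> g x = W x" and x: "x \<in> {-1..1}"
  shows "integral {-1..x} g = integral {-1..x} W"
proof -
  have g': "set_integrable lborel {-1..x} g"
    by (rule set_integrable_subset[OF set_integrable_Icc_if_I01[OF g]]) (use x in auto)
  have W': "set_integrable lborel {-1..x} W"
    by (rule borel_integrable_atLeastAtMost') (rule continuous_on_subset[OF W], use x in auto)
  have "(LBINT s:{-1..x}. g s) = (LBINT s:{-1..x}. W s)"
    unfolding set_lebesgue_integral_def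
  proof (rule integral_cong_AE)
    show "(\<lambda>s. indicator {-1..x} s *\<^sub>R g s) \<in> borel_measurable lborel"
      "(\<lambda>s. indicator {-1..x} s *\<^sub>R W s) \<in> borel_measurable lborel"
      using g' W' by (auto simp: set_integrable_def)
    show "AE s in lborel. indicator {-1..x} s *\<^sub>R g s = indicator {-1..x} s *\<^sub>R W s"
      using ae AE_lborel_singleton[of "-1"] AE_lborel_singleton[of 1]
      by eventually_elim (use x in \<open>auto simp: indicator_def\<close>)
  qed
  then show ?thesis using set_borel_integral_eq_integral(2)[OF g'] set_borel_integral_eq_integral(2)[OF W']
    by simp
qed

text \<open>The representative of \<open>g j\<close> is \<open>c\<^sub>j + \<integral>\<^sub>-\<^sub>1\<^sup>x g\<^sub>j\<^sub>+\<^sub>1\<close>; replacing \<open>g\<^sub>j\<^sub>+\<^sub>1\<close> by its own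
  continuous representative does not change the integral, which makes the representatives
  classically differentiable.\<close>

lemma sobolev_H_continuous_representatives:
  assumes "sobolev_H k v g"
  obtains W where
    "\<And>j. 1 \<le> j \<Longrightarrow> j < k \<Longrightarrow> continuous_on {-1..1} (W j)"
    "\<And>j. 1 \<le> j \<Longrightarrow> j < k \<Longrightarrow> AE x in lborel. x \<in> I01 \<longrightarrow> g j x = W j x"
    "\<And>j x. 1 \<le> j \<Longrightarrow> Suc j < k \<Longrightarrow> x \<in> I01 \<Longrightarrow> (W j has_real_derivative W (Suc j) x) (at x)"
proof -
  have g: "set_integrable lborel I01 (g j)" "weak_deriv j v (g j)" if "1 \<le> j" "j \<le> k" for j
    using assms that by (auto simp: sobolev_H_def intro: L2_I_imp_set_integrable)
  have "\<exists>c. 1 \<le> j \<and> j < k \<longrightarrow> (AE x in lborel. x \<in> I01 \<longrightarrow> g j x = c + integral {-1..x} (g (Suc j)))"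
    for j
  proof (cases "1 \<le> j \<and> j < k")
    case True
    then have "1 \<le> j" "j \<le> k" "1 \<le> Suc j" "Suc j \<le> k" by auto
    from AE_eq_indefinite_integral_if_weak_deriv[OF g(1)[OF this(1,2)] g(1)[OF this(3,4)]
        weak_deriv_Suc[OF g(2)[OF this(1,2)] g(2)[OF this(3,4)]]]
    show ?thesis by blast
  qed blast
  then have "\<exists>c. \<forall>j. 1 \<le> j \<and> j < k \<longrightarrow>
      (AE x in lborel. x \<in> I01 \<longrightarrow> g j x = c j + integral {-1..x} (g (Suc j)))"
    by (intro choice allI)
  then obtain c where "\<forall>j. 1 \<le> j \<and> j < k \<longrightarrow>
      (AE x in lborel. x \<in> I01 \<longrightarrow> g j x = c j + integral {-1..x} (g (Suc j)))"
    by blast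
  then have c: "\<And>j. 1 \<le> j \<Longrightarrow> j < k \<Longrightarrow>
      AE x in lborel. x \<in> I01 \<longrightarrow> g j x = c j + integral {-1..x} (g (Suc j))"
    by blast
  define W where "W j x = c j + integral {-1..x} (g (Suc j))" for j x
  have W_cont: "continuous_on {-1..1} (W j)" if "1 \<le> j" "j < k" for j
  proof -
    have "g (Suc j) integrable_on {-1..1}"
      using set_borel_integral_eq_integral(1)[OF set_integrable_Icc_if_I01[OF g(1)]] that by simp
    then show ?thesis
      unfolding W_def by (intro continuous_intros indefinite_integral_continuous_1)
  qed
  show ?thesis
  proof (rule that)
    show "continuous_on {-1..1} (W j)" if "1 \<le> j" "j < k" for j using W_cont that .
    show "AE x in lborel. x \<in> I01 \<longrightarrow> g j x = W j x" if "1 \<le> j" "j < k" for j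
      using c[OF that] by (simp add: W_def)
  next
    fix j x assume j: "1 \<le> j" "Suc j < k" and x: "x \<in> I01"
    have integral_eq: "integral {-1..y} (g (Suc j)) = integral {-1..y} (W (Suc j))"
      if "y \<in> {-1..1}" for y
      by (rule integral_Icc_cong_AE[OF g(1) W_cont _ that]) (use j c[of "Suc j"] in \<open>auto simp: W_def\<close>)
    have W_eq: "c j + integral {-1..y} (W (Suc j)) = W j y" if "y \<in> {-1..1}" for y
      by (simp only: W_def[of j y] integral_eq[OF that])
    have "((\<lambda>y. integral {-1..y} (W (Suc j))) has_real_derivative W (Suc j) x) (at x within {-1..1})"
      using x j by (intro integral_has_real_derivative W_cont) auto
    then have "((\<lambda>y. c j + integral {-1..y} (W (Suc j))) has_real_derivative W (Suc j) x)
        (at x within {-1..1})"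
      by (rule DERIV_cong[OF DERIV_add[OF DERIV_const]]) simp
    then have "(W j has_real_derivative W (Suc j) x) (at x within {-1..1})"
      by (rule has_field_derivative_transform_within[OF _ zero_less_one]) (use x W_eq in auto)
    moreover have "at x within {-1..1} = at x" by (rule at_within_interior) (use x in auto)
    ultimately show "(W j has_real_derivative W (Suc j) x) (at x)" by simp
  qed
qed

section \<open>The boundary obstruction\<close>

lemma continuous_on_AE_zero_imp_zero:
  fixes \<Phi> :: "real \<Rightarrow> real"
  assumes c: "continuous_on I01 \<Phi>" and ae: "AE x in lborel. x \<in> I01 \<longrightarrow> \<Phi> x = 0"
    and x: "x \<in> I01"
  shows "\<Phi> x = 0"
proof (rule ccontr)
  assume "\<Phi> x \<noteq> 0"
  then obtain e where e: "e > 0" "\<And>y. dist x y < e \<Longrightarrow> \<Phi> y \<noteq> 0"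
    using continuous_on_open_avoid[OF c _ x] by auto
  define e' where "e' = min e (min (x + 1) (1 - x))"
  have e': "0 < e'" using e x by (auto simp: e'_def)
  obtain N where N: "{y \<in> space lborel. \<not> (y \<in> I01 \<longrightarrow> \<Phi> y = 0)} \<subseteq> N"
      "emeasure lborel N = 0" "N \<in> sets lborel"
    using ae by (rule AE_E)
  have "{x - e' <..< x + e'} \<subseteq> N"
  proof
    fix y assume "y \<in> {x - e' <..< x + e'}"
    then have "dist x y < e" "y \<in> I01" by (auto simp: e'_def dist_real_def)
    then show "y \<in> N" using N(1) e(2) by auto
  qed
  then have "emeasure lborel {x - e' <..< x + e'} \<le> emeasure lborel N"
    by (rule emeasure_mono) (use N in auto)
  then show False using N(2) e' by simp
qed

text \<open>Coefficient and right-hand side of the equation as functions of \<open>u = 2 + y\<close>, where all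
  denominators are powers of \<open>u\<close>, with their first two derivatives.\<close>

definition coef :: "real \<Rightarrow> real" where "coef u = 2 * (u - 2) + 6 / u"
definition coef' :: "real \<Rightarrow> real" where "coef' u = 2 - 6 / u\<^sup>2"
definition coef'' :: "real \<Rightarrow> real" where "coef'' u = 12 / u ^ 3"
definition rhs :: "real \<Rightarrow> real" where "rhs u = ln u + 1 - (19/4) / u + 3 / u\<^sup>2"
definition rhs' :: "real \<Rightarrow> real" where "rhs' u = 1 / u + (19/4) / u\<^sup>2 - 6 / u ^ 3"
definition rhs'' :: "real \<Rightarrow> real" where "rhs'' u = - 1 / u\<^sup>2 - (19/2) / u ^ 3 + 18 / u ^ 4"

lemma has_real_derivative_coef: "0 < u \<Longrightarrow> (coef has_real_derivative coef' u) (at u)"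
  unfolding coef_def[abs_def] coef'_def
  by (auto intro!: derivative_eq_intros simp: field_simps power2_eq_square)

lemma has_real_derivative_coef': "0 < u \<Longrightarrow> (coef' has_real_derivative coef'' u) (at u)"
  unfolding coef'_def[abs_def] coef''_def
  by (auto intro!: derivative_eq_intros simp: field_simps power2_eq_square power3_eq_cube)

lemma has_real_derivative_rhs: "0 < u \<Longrightarrow> (rhs has_real_derivative rhs' u) (at u)"
  unfolding rhs_def[abs_def] rhs'_def
  by (auto intro!: derivative_eq_intros simp: field_simps power2_eq_square power3_eq_cube)

lemma has_real_derivative_rhs': "0 < u \<Longrightarrow> (rhs' has_real_derivative rhs'' u) (at u)"
  unfolding rhs'_def[abs_def] rhs''_def
  by (auto intro!: derivative_eq_intros simp: field_simps power2_eq_square power3_eq_cube eval_nat_numeral)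

lemma continuous_on_coef_rhs_shifted:
  "continuous_on {-1..1} (\<lambda>y. coef (2 + y))" "continuous_on {-1..1} (\<lambda>y. coef' (2 + y))"
  "continuous_on {-1..1} (\<lambda>y. coef'' (2 + y))" "continuous_on {-1..1} (\<lambda>y. rhs (2 + y))"
  "continuous_on {-1..1} (\<lambda>y. rhs' (2 + y))" "continuous_on {-1..1} (\<lambda>y. rhs'' (2 + y))"
  unfolding coef_def coef'_def coef''_def rhs_def rhs'_def rhs''_def
  by (auto intro!: continuous_intros)

lemma coef_rhs_at_1:
  "coef 1 = 4" "coef' 1 = -4" "coef'' 1 = 12" "rhs 1 = -3/4" "rhs' 1 = -1/4" "rhs'' 1 = 15/2"
  by (simp_all add: coef_def coef'_def coef''_def rhs_def rhs'_def rhs''_def)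

lemma equation_in_shifted_variable:
  assumes "-2 < y"
  shows "2 * y + 6 / (2 + y) = coef (2 + y)"
    and "ln (2 + y) + (1 / (2 + y)\<^sup>2) * (y\<^sup>2 - 3 / 4 * y - 5 / 2) = rhs (2 + y)"
proof -
  have "(1 / u\<^sup>2) * ((u - 2)\<^sup>2 - 3 / 4 * (u - 2) - 5 / 2) = 1 - (19/4) / u + 3 / u\<^sup>2"
    if "u \<noteq> 0" for u :: real
    using that by (simp add: field_simps power2_eq_square)
  from this[of "2 + y"] assms
  show "ln (2 + y) + (1 / (2 + y)\<^sup>2) * (y\<^sup>2 - 3 / 4 * y - 5 / 2) = rhs (2 + y)"
    by (simp add: rhs_def)
qed (simp add: coef_def)

lemma has_real_derivative_shift:
  "(f has_real_derivative D) (at (c + y)) \<Longrightarrow> ((\<lambda>y. f (c + y)) has_real_derivative D) (at y)"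
proof -
  assume "(f has_real_derivative D) (at (c + y))"
  moreover have "((\<lambda>y. c + y) has_real_derivative 1) (at y)" by (auto intro!: derivative_eq_intros)
  ultimately show ?thesis using DERIV_chain2 by fastforce
qed

lemma zero_on_I01_imp_zero_at_minus_one:
  assumes "continuous_on {-1..1} f" "\<And>y. y \<in> I01 \<Longrightarrow> f y = (0::real)"
  shows "f (-1) = 0"
  using continuous_constant_on_closure[of "I01" f 0 "-1"] assms by simp

lemma derivative_zero_if_zero_on_I01:
  assumes "\<And>y. y \<in> I01 \<Longrightarrow> f y = 0" "\<And>y. y \<in> I01 \<Longrightarrow> (f has_real_derivative f' y) (at y)"
    and "y \<in> I01"
  shows "f' y = 0"
proof -
  have "(f has_real_derivative 0) (at y)"
    by (rule has_field_derivative_transform_within_open[where f="\<lambda>_. 0" and S=I01]) (use assms in auto)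
  then show ?thesis using DERIV_unique assms(2,3) by blast
qed

lemma no_regular_solution_at_minus_one:
  fixes W1 W2 W3 W4 :: "real \<Rightarrow> real"
  assumes cont: "continuous_on {-1..1} W1" "continuous_on {-1..1} W2"
      "continuous_on {-1..1} W3" "continuous_on {-1..1} W4"
    and W1': "\<And>y. y \<in> I01 \<Longrightarrow> (W1 has_real_derivative W2 y) (at y)"
    and W2': "\<And>y. y \<in> I01 \<Longrightarrow> (W2 has_real_derivative W3 y) (at y)"
    and W3': "\<And>y. y \<in> I01 \<Longrightarrow> (W3 has_real_derivative W4 y) (at y)"
    and ode: "AE y in lborel. y \<in> I01 \<longrightarrow> coef (2 + y) * W1 y + (y\<^sup>2 - 1) * W2 y = rhs (2 + y)"
  shows False
proof -
  define \<Phi>0 where "\<Phi>0 y = coef (2 + y) * W1 y + (y\<^sup>2 - 1) * W2 y - rhs (2 + y)" for y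
  define \<Phi>1 where "\<Phi>1 y = coef' (2 + y) * W1 y + (coef (2 + y) + 2 * y) * W2 y + (y\<^sup>2 - 1) * W3 y
      - rhs' (2 + y)" for y
  define \<Phi>2 where "\<Phi>2 y = coef'' (2 + y) * W1 y + (2 * coef' (2 + y) + 2) * W2 y
      + (coef (2 + y) + 4 * y) * W3 y + (y\<^sup>2 - 1) * W4 y - rhs'' (2 + y)" for y
  note shifted = has_real_derivative_shift[OF has_real_derivative_coef]
    has_real_derivative_shift[OF has_real_derivative_coef']
    has_real_derivative_shift[OF has_real_derivative_rhs]
    has_real_derivative_shift[OF has_real_derivative_rhs']
  have \<Phi>0': "(\<Phi>0 has_real_derivative \<Phi>1 y) (at y)" if "y \<in> I01" for y
  proof -
    have "(\<Phi>0 has_real_derivative (coef' (2 + y) * W1 y + W2 y * coef (2 + y))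
        + (2 * y * W2 y + W3 y * (y\<^sup>2 - 1)) - rhs' (2 + y)) (at y)"
      unfolding \<Phi>0_def[abs_def] using that
      by (intro DERIV_diff DERIV_add DERIV_mult shifted W1' W2') (auto intro!: derivative_eq_intros)
    then show ?thesis by (rule DERIV_cong) (simp add: \<Phi>1_def algebra_simps)
  qed
  have \<Phi>1': "(\<Phi>1 has_real_derivative \<Phi>2 y) (at y)" if "y \<in> I01" for y
  proof -
    have "(\<Phi>1 has_real_derivative (coef'' (2 + y) * W1 y + W2 y * coef' (2 + y))
        + ((coef' (2 + y) + 2) * W2 y + W3 y * (coef (2 + y) + 2 * y))
        + (2 * y * W3 y + W4 y * (y\<^sup>2 - 1)) - rhs'' (2 + y)) (at y)"
      unfolding \<Phi>1_def[abs_def] using that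
      by (intro DERIV_diff DERIV_add DERIV_mult shifted W1' W2' W3') (auto intro!: derivative_eq_intros)
    then show ?thesis by (rule DERIV_cong) (simp add: \<Phi>2_def algebra_simps)
  qed
  have cont\<Phi>: "continuous_on {-1..1} \<Phi>0" "continuous_on {-1..1} \<Phi>1" "continuous_on {-1..1} \<Phi>2"
    unfolding \<Phi>0_def[abs_def] \<Phi>1_def[abs_def] \<Phi>2_def[abs_def]
    by (intro continuous_intros continuous_on_coef_rhs_shifted cont)+
  have "continuous_on I01 \<Phi>0" using cont\<Phi>(1) by (rule continuous_on_subset) auto
  moreover have "AE y in lborel. y \<in> I01 \<longrightarrow> \<Phi>0 y = 0"
    using ode by eventually_elim (simp add: \<Phi>0_def)
  ultimately have z0: "\<Phi>0 y = 0" if "y \<in> I01" for y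
    using continuous_on_AE_zero_imp_zero that by blast
  have z1: "\<Phi>1 y = 0" if "y \<in> I01" for y by (rule derivative_zero_if_zero_on_I01[OF z0 \<Phi>0' that])
  have z2: "\<Phi>2 y = 0" if "y \<in> I01" for y by (rule derivative_zero_if_zero_on_I01[OF z1 \<Phi>1' that])
  have "\<Phi>0 (-1) = 0" "\<Phi>1 (-1) = 0" "\<Phi>2 (-1) = 0"
    using zero_on_I01_imp_zero_at_minus_one cont\<Phi> z0 z1 z2 by blast+
  then show False
    by (simp add: \<Phi>0_def \<Phi>1_def \<Phi>2_def coef_rhs_at_1)
qed


theorem lemmaB1:
  shows "\<not> (\<exists>v g. sobolev_H 5 v g \<and>
     (AE y in lborel. y \<in> I01 \<longrightarrow>
        (2 * y + 6 / (2 + y)) * g 1 y + (y\<^sup>2 - 1) * g 2 y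
        = ln (2 + y) + (1 / (2 + y)\<^sup>2) * (y\<^sup>2 - 3 / 4 * y - 5 / 2)))"
proof (intro notI, elim exE conjE)
  fix v g
  assume sob: "sobolev_H 5 v g" and equation: "AE y in lborel. y \<in> I01 \<longrightarrow>
      (2 * y + 6 / (2 + y)) * g 1 y + (y\<^sup>2 - 1) * g 2 y
      = ln (2 + y) + (1 / (2 + y)\<^sup>2) * (y\<^sup>2 - 3 / 4 * y - 5 / 2)"
  obtain W where cont: "\<And>j. 1 \<le> j \<Longrightarrow> j < 5 \<Longrightarrow> continuous_on {-1..1} (W j)"
    and ae: "\<And>j. 1 \<le> j \<Longrightarrow> j < 5 \<Longrightarrow> AE x in lborel. x \<in> I01 \<longrightarrow> g j x = W j x"
    and deriv: "\<And>j x. 1 \<le> j \<Longrightarrow> Suc j < 5 \<Longrightarrow> x \<in> I01 \<Longrightarrow>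
      (W j has_real_derivative W (Suc j) x) (at x)"
    using sobolev_H_continuous_representatives[OF sob] by blast
  have "AE x in lborel. x \<in> I01 \<longrightarrow> g 1 x = W 1 x" "AE x in lborel. x \<in> I01 \<longrightarrow> g 2 x = W 2 x"
    using ae by simp_all
  with equation have "AE y in lborel. y \<in> I01 \<longrightarrow>
      coef (2 + y) * W 1 y + (y\<^sup>2 - 1) * W 2 y = rhs (2 + y)"
  proof eventually_elim
    case (elim y)
    show ?case
    proof
      assume y: "y \<in> I01"
      then have "-2 < y" by simp
      from elim(1) y have "(2 * y + 6 / (2 + y)) * g 1 y + (y\<^sup>2 - 1) * g 2 y
          = ln (2 + y) + (1 / (2 + y)\<^sup>2) * (y\<^sup>2 - 3 / 4 * y - 5 / 2)" by blast
      then show "coef (2 + y) * W 1 y + (y\<^sup>2 - 1) * W 2 y = rhs (2 + y)"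
        unfolding equation_in_shifted_variable[OF \<open>-2 < y\<close>] using elim(2,3) y by simp
    qed
  qed
  moreover have "(W 1 has_real_derivative W 2 y) (at y)" "(W 2 has_real_derivative W 3 y) (at y)"
    "(W 3 has_real_derivative W 4 y) (at y)" if "y \<in> I01" for y
    using deriv[of 1 y] deriv[of 2 y] deriv[of 3 y] that by (simp_all add: numeral_eq_Suc)
  ultimately show False
    by (intro no_regular_solution_at_minus_one[of "W 1" "W 2" "W 3" "W 4"] cont) auto
qed

end
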